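(* Consider the model described in the context with fixed $N_\text{c}$ and $s$, and let the data rate $r$ vary over $(\lambda L,\infty)$; as $r$ decreases to $\lambda L$ the mean delay $\mathbb{E}\{D\}$ increases to $\infty$. Let $P_\text{o} = N_\text{c} P_\text{Bm} + \Delta_{P_\text{B}} c_0 s^{\beta-1} + P_\text{RF}$ and $P_\text{s} = P_\text{o} - P_\text{sleep} - 2\lambda E_\text{sw}$, and let $\Omega$ denote the principal branch of the Lambert W function. Then: (1) If \[ \lambda < \frac{P_\text{o} - P_\text{sleep}}{2E_\text{sw}} \quad\text{and}\quad L < \frac{W}{\lambda \ln 2}\left[\Omega\!\left(\frac{g\eta P_\text{s} - 1}{\mathrm{e}}\right) + 1\right], \] then there exists a unique rate $r_\text{e}^* \in (\lambda L,\infty)$ minimizing the average power consumption $\mathbb{E}\{P\}$, given by \[ r_\text{e}^* = \frac{W}{\ln 2}\left[\Omega\!\left(\frac{g\eta P_\text{s} - 1}{\mathrm{e}}\right) + 1\right]. \] (2) If this condition is not satisfied, then the average power consumption $\mathbb{E}\{P\}$ is monotonically decreasing in the average delay $\mathbb{E}\{D\}$ (equivalently, increasing in $r$ on $(\lambda L,\infty)$). (3) In both cases, as the average delay tends to infinity (i.e. $r \downarrow \lambda L$), the average power consumption tends to \[ P_\text{o} + \kappa \Delta_{P_\text{B}} s^{\beta-1}\lambda L + \frac{2^{\lambda L/W} - 1}{g\eta}. \]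
   Context: A virtual base station (VBS) is modeled as an M/G/1 processor-sharing queue: flows arrive at rate $\lambda>0$, each with mean size $L>0$, and are served at total rate $r$ (bits/s) whenever the queue is nonempty; $r > \lambda L$, and the load is $\rho = \lambda L / r$. The mean queue length is $\mathbb{E}\{n\} = \lambda L/(r-\lambda L)$ and the mean delay is $\mathbb{E}\{D\} = \mathbb{E}\{n\}/\lambda = L/(r-\lambda L)$. The transmit power $P_\text{out}$ needed for rate $r$ is given by $r = W\log_2(1 + g P_\text{out})$, i.e. $P_\text{out} = (2^{r/W}-1)/g$, where $W>0$ is the bandwidth and $g>0$ the channel gain. When busy the VBS consumes $P_\text{B} + P_\text{R}$ with RRH power $P_\text{R} = P_\text{out}/\eta + P_\text{RF}$ ($\eta\in(0,1]$ the power amplifier efficiency, $P_\text{RF}\ge 0$) and BBU power $P_\text{B} = N_\text{c} P_\text{Bm} + \Delta_{P_\text{B}} c_0 s^{\beta-1} + \Delta_{P_\text{B}}\kappa r s^{\beta-1}$, where $N_\text{c}$ is the number of active CPU cores, $s>0$ the CPU speed, $P_\text{Bm}$ the minimum per-core power, $\Delta_{P_\text{B}} = (P_\text{BM}-P_\text{Bm})/s_0^\beta \ge 0$ with $P_\text{BM}$ the maximum per-core power and $s_0$ a reference speed, and $c_0,\kappa,\beta$ are nonnegative constants. When the queue is empty the VBS sleeps with power $P_\text{sleep}$, and each on/off switch costs energy $E_\text{sw} > 0$. With $\mathbb{E}\{T_\text{c}\} = 1/(\lambda(1-\rho))$ the mean length of a busy-plus-idle cycle, the average power is $\mathbb{E}\{P\}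 = \rho (P_\text{B} + P_\text{R}) + (1-\rho) P_\text{sleep} + 2E_\text{sw}/\mathbb{E}\{T_\text{c}\}$. *)

theory Defs
  imports Complex_Main
begin

text \<open>Principal branch of the Lambert W function: for x \<ge> -1/e, the unique
  w \<ge> -1 with w * exp w = x.\<close>
definition lambertW0 :: "real \<Rightarrow> real" where
  "lambertW0 x = (THE w. w \<ge> -1 \<and> w * exp w = x)"

definition P_out :: "real \<Rightarrow> real \<Rightarrow> real \<Rightarrow> real" where
  "P_out W g r = (2 powr (r / W) - 1) / g"

definition P_RRH :: "real \<Rightarrow> real \<Rightarrow> real \<Rightarrow> real \<Rightarrow> real \<Rightarrow> real" where
  "P_RRH W g \<eta> P_RF r = P_out W g r / \<eta> + P_RF"

definition Delta_PB :: "real \<Rightarrow> real \<Rightarrow> real \<Rightarrow> real \<Rightarrow> real" where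
  "Delta_PB P_BM P_Bm s0 \<beta> = (P_BM - P_Bm) / (s0 powr \<beta>)"

definition P_BBU :: "nat \<Rightarrow> real \<Rightarrow> real \<Rightarrow> real \<Rightarrow> real \<Rightarrow> real \<Rightarrow> real \<Rightarrow> real \<Rightarrow> real" where
  "P_BBU Nc P_Bm \<Delta> c0 \<kappa> s \<beta> r =
     real Nc * P_Bm + \<Delta> * c0 * s powr (\<beta> - 1) + \<Delta> * \<kappa> * r * s powr (\<beta> - 1)"

definition mean_delay :: "real \<Rightarrow> real \<Rightarrow> real \<Rightarrow> real" where
  "mean_delay lam L r = L / (r - lam * L)"

definition avg_power ::
  "real \<Rightarrow> real \<Rightarrow> real \<Rightarrow> real \<Rightarrow> real \<Rightarrow> real \<Rightarrow> nat \<Rightarrow> real \<Rightarrow> real \<Rightarrow> real \<Rightarrow> real \<Rightarrow> real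
   \<Rightarrow> real \<Rightarrow> real \<Rightarrow> real \<Rightarrow> real \<Rightarrow> real" where
  "avg_power lam L W g \<eta> P_RF Nc P_Bm \<Delta> c0 \<kappa> s \<beta> P_sleep E_sw r =
     (let \<rho> = lam * L / r; ETc = 1 / (lam * (1 - \<rho>)) in
      \<rho> * (P_BBU Nc P_Bm \<Delta> c0 \<kappa> s \<beta> r + P_RRH W g \<eta> P_RF r)
      + (1 - \<rho>) * P_sleep + 2 * E_sw / ETc)"

end

theory Submission imports Defs begin

text \<open>Up to an additive constant and a positive factor, the average power is
  \<open>h r = (a + exp (c r)) / r\<close> with \<open>c = ln 2 / W\<close> and \<open>a = g \<eta> P_s - 1\<close>.
  Its derivative has the sign of \<open>(c r - 1) exp (c r) - a\<close>, which is strictly increasing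
  in \<open>r > 0\<close>. It has a positive zero, namely \<open>r\<^sub>e\<^sup>*\<close>, exactly when \<open>a > -1\<close>, i.e.
  \<open>P_s > 0\<close>, which makes \<open>r\<^sub>e\<^sup>*\<close> the unique minimiser of \<open>h\<close> on \<open>(0, \<infinity>)\<close>; if there is no such zero
  beyond \<open>\<lambda> L\<close>, then \<open>h\<close> is strictly increasing on \<open>(\<lambda> L, \<infinity>)\<close>. The limit at \<open>\<lambda> L\<close>
  is just continuity of \<open>h\<close> there.\<close>

definition lambertW_shift :: "real \<Rightarrow> real" where
  "lambertW_shift x = (x - 1) * exp x"

definition exp_ratio :: "real \<Rightarrow> real \<Rightarrow> real \<Rightarrow> real" where
  "exp_ratio a c r = (a + exp (c * r)) / r"

lemma lambertW_shift_0 [simp]: "lambertW_shift 0 = -1"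
  by (simp add: lambertW_shift_def)

lemma lambertW_shift_strict_mono:
  assumes "0 \<le> x" "x < y"
  shows "lambertW_shift x < lambertW_shift y"
proof (rule DERIV_pos_imp_increasing_open[OF \<open>x < y\<close>])
  fix z assume "x < z" "z < y"
  then show "\<exists>d. DERIV lambertW_shift z :> d \<and> d > 0"
    using \<open>0 \<le> x\<close> unfolding lambertW_shift_def
    by (intro exI conjI derivative_eq_intros refl) (auto simp: algebra_simps)
qed (auto simp: lambertW_shift_def intro!: continuous_intros)

lemma lambertW_shift_mono:
  assumes "0 \<le> x" "x \<le> y"
  shows "lambertW_shift x \<le> lambertW_shift y"
  using lambertW_shift_strict_mono[of x y] assms by (cases "x = y") auto

lemma lambertW_shift_surj:
  assumes "a > -1"
  obtains x where "x > 0" "lambertW_shift x = a"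
proof -
  have "a + 1 \<le> lambertW_shift (a + 2)"
    using assms by (simp add: lambertW_shift_def add.commute)
  moreover have "isCont lambertW_shift x" for x
    unfolding lambertW_shift_def by (intro continuous_intros)
  ultimately obtain x where "0 \<le> x" "x \<le> a + 2" "lambertW_shift x = a"
    using IVT[of lambertW_shift 0 a "a + 2"] assms by auto
  moreover have "x \<noteq> 0"
    using \<open>lambertW_shift x = a\<close> assms by auto
  ultimately show ?thesis
    using that by force
qed

text \<open>\<open>w exp w = a / e\<close> is \<open>lambertW_shift (w + 1) = a\<close>, so \<open>lambertW0 (a / e) + 1\<close> is the
  positive root of \<open>lambertW_shift x = a\<close>.\<close>
lemma lambertW0_shift:
  assumes "a > -1"
  shows "lambertW0 (a / exp 1) + 1 > 0" "lambertW_shift (lambertW0 (a / exp 1) + 1) = a"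
proof -
  have shift: "w * exp w = a / exp 1 \<longleftrightarrow> lambertW_shift (w + 1) = a" for w
    by (simp add: lambertW_shift_def exp_add field_simps)
  obtain x where x: "x > 0" "lambertW_shift x = a"
    using lambertW_shift_surj[OF assms] .
  have "w = x - 1" if "w \<ge> -1" "w * exp w = a / exp 1" for w
    using that x shift lambertW_shift_strict_mono[of "w + 1" x] lambertW_shift_strict_mono[of x "w + 1"]
    by (cases "w + 1 < x" "x < w + 1" rule: bool.exhaust[case_product bool.exhaust]) auto
  then have "lambertW0 (a / exp 1) = x - 1"
    unfolding lambertW0_def using x shift[of "x - 1"] by (intro the_equality) auto
  then show "lambertW0 (a / exp 1) + 1 > 0" "lambertW_shift (lambertW0 (a / exp 1) + 1) = a"
    using x by simp_all
qed

lemma lambertW0_shift_le: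
  assumes "0 \<le> x" "a \<le> -1 \<or> lambertW0 (a / exp 1) + 1 \<le> x"
  shows "a \<le> lambertW_shift x"
proof (cases "a \<le> -1")
  case True
  then show ?thesis
    using lambertW_shift_mono[of 0 x] \<open>0 \<le> x\<close> by simp
next
  case False
  then show ?thesis
    using assms lambertW0_shift[of a] lambertW_shift_mono[of "lambertW0 (a / exp 1) + 1" x] by simp
qed

lemma exp_ratio_deriv:
  assumes "r \<noteq> 0"
  shows "(exp_ratio a c has_real_derivative (lambertW_shift (c * r) - a) / r\<^sup>2) (at r)"
proof -
  have "(exp_ratio a c has_real_derivative (c * exp (c * r) * r - (a + exp (c * r))) / (r * r)) (at r)"
    unfolding exp_ratio_def using assms by (auto intro!: derivative_eq_intros)
  then show ?thesis
    by (simp add: lambertW_shift_def power2_eq_square algebra_simps)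
qed

lemma continuous_on_exp_ratio: "0 \<notin> S \<Longrightarrow> continuous_on S (exp_ratio a c)"
  unfolding exp_ratio_def by (intro continuous_intros) auto

lemma exp_ratio_strict_mono:
  assumes "c > 0" "0 < r1" "r1 < r2" "a \<le> lambertW_shift (c * r1)"
  shows "exp_ratio a c r1 < exp_ratio a c r2"
proof (rule DERIV_pos_imp_increasing_open[OF \<open>r1 < r2\<close>])
  fix z assume "r1 < z" "z < r2"
  then have "a < lambertW_shift (c * z)"
    using assms lambertW_shift_strict_mono[of "c * r1" "c * z"] by simp
  then show "\<exists>d. DERIV (exp_ratio a c) z :> d \<and> d > 0"
    using exp_ratio_deriv[of z a c] \<open>r1 < z\<close> \<open>0 < r1\<close> by auto
qed (use assms in \<open>auto intro: continuous_on_exp_ratio\<close>)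

lemma exp_ratio_strict_antimono:
  assumes "c > 0" "0 < r1" "r1 < r2" "lambertW_shift (c * r2) \<le> a"
  shows "exp_ratio a c r2 < exp_ratio a c r1"
proof (rule DERIV_neg_imp_decreasing_open[OF \<open>r1 < r2\<close>])
  fix z assume "r1 < z" "z < r2"
  then have "lambertW_shift (c * z) < a"
    using assms lambertW_shift_strict_mono[of "c * z" "c * r2"] by simp
  then show "\<exists>d. DERIV (exp_ratio a c) z :> d \<and> d < 0"
    using exp_ratio_deriv[of z a c] \<open>r1 < z\<close> \<open>0 < r1\<close> by (auto simp: divide_neg_pos)
qed (use assms in \<open>auto intro: continuous_on_exp_ratio\<close>)

lemma exp_ratio_strict_min:
  assumes "c > 0" "0 < x" "lambertW_shift (c * x) = a" "0 < r" "r \<noteq> x"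
  shows "exp_ratio a c x < exp_ratio a c r"
  using assms exp_ratio_strict_mono[of c x r a] exp_ratio_strict_antimono[of c r x a]
  by (cases "r < x") auto

lemma avg_power_eq_exp_ratio:
  assumes "r \<noteq> 0" "g \<noteq> 0" "\<eta> \<noteq> 0" "W \<noteq> 0"
  shows "avg_power lam L W g \<eta> P_RF Nc P_Bm \<Delta> c0 \<kappa> s \<beta> P_sleep E_sw r =
    P_sleep + 2 * lam * E_sw + \<kappa> * \<Delta> * s powr (\<beta> - 1) * lam * L
    + lam * L / (g * \<eta>) * exp_ratio
        (g * \<eta> * (real Nc * P_Bm + \<Delta> * c0 * s powr (\<beta> - 1) + P_RF - P_sleep - 2 * lam * E_sw) - 1)
        (ln 2 / W) r"
  using assms
  by (simp add: avg_power_def Let_def P_BBU_def P_RRH_def P_out_def exp_ratio_def powr_def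
      field_simps)

lemma mean_delay_less_iff:
  assumes "L > 0" "lam * L < r1" "lam * L < r2"
  shows "mean_delay lam L r1 < mean_delay lam L r2 \<longleftrightarrow> r2 < r1"
proof -
  have "mean_delay lam L r1 < mean_delay lam L r2 \<longleftrightarrow> r2 - lam * L < r1 - lam * L"
    unfolding mean_delay_def using assms by (simp add: divide_less_cancel field_simps)
  then show ?thesis
    by simp
qed

theorem proposition1:
  fixes lam L W g \<eta> P_RF P_Bm P_BM s0 c0 \<kappa> s \<beta> P_sleep E_sw :: real
    and Nc :: nat
    and \<Delta> P_o P_s r_e :: real and EP :: "real \<Rightarrow> real"
  assumes "lam > 0" and "L > 0" and "W > 0" and "g > 0"
    and "0 < \<eta>" and "\<eta> \<le> 1" and "P_RF \<ge> 0"
    and "s > 0" and "s0 > 0" and "P_BM \<ge> P_Bm"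
    and "c0 \<ge> 0" and "\<kappa> \<ge> 0" and "\<beta> \<ge> 0" and "E_sw > 0"
    and Delta_def: "\<Delta> = Delta_PB P_BM P_Bm s0 \<beta>"
    and EP_def: "EP = avg_power lam L W g \<eta> P_RF Nc P_Bm \<Delta> c0 \<kappa> s \<beta> P_sleep E_sw"
    and P_o_def: "P_o = real Nc * P_Bm + \<Delta> * c0 * s powr (\<beta> - 1) + P_RF"
    and P_s_def: "P_s = P_o - P_sleep - 2 * lam * E_sw"
    and r_e_def: "r_e = W / ln 2 * (lambertW0 ((g * \<eta> * P_s - 1) / exp 1) + 1)"
  shows
    "(((lam < (P_o - P_sleep) / (2 * E_sw) \<and> L < r_e / lam) \<longrightarrow>
        r_e \<in> {lam * L<..} \<and>
        (\<forall>r\<in>{lam * L<..}. EP r_e \<le> EP r) \<and>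
        (\<forall>r\<in>{lam * L<..}. (\<forall>r'\<in>{lam * L<..}. EP r \<le> EP r') \<longrightarrow> r = r_e))
     \<and>
     (\<not> (lam < (P_o - P_sleep) / (2 * E_sw) \<and> L < r_e / lam) \<longrightarrow>
        (\<forall>r1\<in>{lam * L<..}. \<forall>r2\<in>{lam * L<..}.
           mean_delay lam L r1 < mean_delay lam L r2 \<longrightarrow> EP r1 > EP r2))
     \<and>
     (EP \<longlongrightarrow> P_o + \<kappa> * \<Delta> * s powr (\<beta> - 1) * lam * L + (2 powr (lam * L / W) - 1) / (g * \<eta>))
        (at_right (lam * L)))"
proof -
  define a where "a = g * \<eta> * P_s - 1"
  define c where "c = ln 2 / W"
  define h where "h = exp_ratio a c"
  define C where "C = P_sleep + 2 * lam * E_sw + \<kappa> * \<Delta> * s powr (\<beta> - 1) * lam * L"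
  define K where "K = lam * L / (g * \<eta>)"
  have "c > 0" "K > 0" "lam * L > 0"
    using assms by (simp_all add: c_def K_def)
  have EP_eq: "EP r = C + K * h r" if "r \<noteq> 0" for r
    using avg_power_eq_exp_ratio that assms
    by (simp add: EP_def C_def K_def h_def a_def c_def P_s_def P_o_def)
  have EP_less: "EP r1 < EP r2 \<longleftrightarrow> h r1 < h r2" if "lam * L < r1" "lam * L < r2" for r1 r2
    using that EP_eq[of r1] EP_eq[of r2] \<open>K > 0\<close> \<open>lam * L > 0\<close> by simp
  have c_r_e: "c * r_e = lambertW0 (a / exp 1) + 1"
    using assms by (simp add: c_def r_e_def a_def)
  have cond_iff: "(lam < (P_o - P_sleep) / (2 * E_sw) \<and> L < r_e / lam) \<longleftrightarrow>
      a > -1 \<and> c * (lam * L) < c * r_e"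
  proof -
    have "lam < (P_o - P_sleep) / (2 * E_sw) \<longleftrightarrow> P_s > 0"
      using assms by (simp add: P_s_def field_simps)
    moreover have "P_s > 0 \<longleftrightarrow> a > -1"
      using mult_pos_pos[OF \<open>g > 0\<close> \<open>\<eta> > 0\<close>] by (auto simp: a_def dest: zero_less_mult_pos)
    moreover have "L < r_e / lam \<longleftrightarrow> c * (lam * L) < c * r_e"
      using \<open>lam > 0\<close> \<open>c > 0\<close> by (simp add: pos_less_divide_eq mult.commute)
    ultimately show ?thesis
      by simp
  qed
  have part1: "r_e \<in> {lam * L<..} \<and> (\<forall>r\<in>{lam * L<..}. EP r_e \<le> EP r) \<and>
      (\<forall>r\<in>{lam * L<..}. (\<forall>r'\<in>{lam * L<..}. EP r \<le> EP r') \<longrightarrow> r = r_e)"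
    if "a > -1" "lam * L < r_e"
  proof -
    have "EP r_e < EP r" if "lam * L < r" "r \<noteq> r_e" for r
    proof -
      have "h r_e < h r"
        unfolding h_def using lambertW0_shift[OF \<open>a > -1\<close>] c_r_e \<open>c > 0\<close> \<open>lam * L > 0\<close>
          \<open>lam * L < r_e\<close> that
        by (intro exp_ratio_strict_min) auto
      then show ?thesis
        using EP_less that \<open>lam * L < r_e\<close> by simp
    qed
    with \<open>lam * L < r_e\<close> show ?thesis
      by (metis greaterThan_iff linorder_not_less order_less_imp_le)
  qed
  have part2: "EP r2 < EP r1"
    if "\<not> (a > -1 \<and> c * (lam * L) < c * r_e)" "lam * L < r2" "r2 < r1" for r1 r2
  proof -
    have "c * (lam * L) < c * r2"
      using that \<open>c > 0\<close> by simp
    then have "a \<le> -1 \<or> lambertW0 (a / exp 1) + 1 \<le> c * r2"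
      using that(1) c_r_e by linarith
    then have "a \<le> lambertW_shift (c * r2)"
      using that \<open>c > 0\<close> \<open>lam * L > 0\<close> by (intro lambertW0_shift_le) auto
    then show ?thesis
      using EP_less exp_ratio_strict_mono \<open>c > 0\<close> \<open>lam * L > 0\<close> that by (simp add: h_def)
  qed
  have "((\<lambda>r. C + K * h r) \<longlongrightarrow> C + K * h (lam * L)) (at_right (lam * L))"
    unfolding h_def exp_ratio_def using \<open>lam * L > 0\<close> by (intro tendsto_intros) auto
  moreover have "eventually (\<lambda>r. C + K * h r = EP r) (at_right (lam * L))"
    using EP_eq \<open>lam * L > 0\<close> by (intro eventually_at_rightI[of _ "lam * L + 1"]) auto
  moreover have "C + K * h (lam * L) =
      P_o + \<kappa> * \<Delta> * s powr (\<beta> - 1) * lam * L + (2 powr (lam * L / W) - 1) / (g * \<eta>)"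
    using assms \<open>lam * L > 0\<close>
    by (simp add: C_def K_def h_def exp_ratio_def a_def c_def P_s_def powr_def field_simps)
  ultimately have part3: "(EP \<longlongrightarrow>
      P_o + \<kappa> * \<Delta> * s powr (\<beta> - 1) * lam * L + (2 powr (lam * L / W) - 1) / (g * \<eta>))
      (at_right (lam * L))"
    using tendsto_cong by fastforce
  show ?thesis
    unfolding cond_iff using part1 part2 part3 mean_delay_less_iff[OF \<open>L > 0\<close>] \<open>c > 0\<close> by auto
qed

end
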